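(* Fix $0<\beta<1$. For every general channel $\mathbf W$ and all reals $R_1,R_2$, \[ C_p(R_2,R_1\mid\mathbf W)=\inf_{\mathbf P}\lim_{\gamma\downarrow0}I_p(R_2-\gamma,R_1\mid\mathbf P,\mathbf W)=\inf_{\mathbf P}\sup_{\mathbf Q}\lim_{\gamma\downarrow0}J_p(R_2-\gamma,R_1\mid\mathbf P,\mathbf Q,\mathbf W), \] and for every $0\le\epsilon<1$, \[ C(\epsilon,R_1\mid\mathbf W)=\sup_{\mathbf P}I(\epsilon,R_1\mid\mathbf P,\mathbf W)=\sup_{\mathbf P}\inf_{\mathbf Q}J(\epsilon,R_1\mid\mathbf P,\mathbf Q,\mathbf W). \]
   Context: A general channel $\mathbf W=\{W^n\}_{n\ge1}$ consists of finite (or countable) sets $\mathcal X_n,\mathcal Y_n$ and distributions $W^n_x$ on $\mathcal Y_n$, $x\in\mathcal X_n$. $\mathbf P=\{P^n\}$ ranges over sequences of distributions on $\mathcal X_n$, $\mathbf Q=\{Q^n\}$ over sequences of distributions on $\mathcal Y_n$; $W^n_{P^n}=\sum_xP^n(x)W^n_x$. Logarithms natural. Define $I_p(R_2,R_1|\mathbf P,\mathbf W)=\limsup_n\sum_xP^n(x)W^n_x\{y:\frac1{n^\beta}(\log\frac{W^n_x(y)}{W^n_{P^n}(y)}-nR_1)<R_2\}$, $I(\epsilon,R_1|\mathbf P,\mathbf W)=\sup\{R_2:I_p(R_2,R_1|\mathbf P,\mathbf W)\le\epsilon\}$; $J_p(R_2,R_1|\mathbf P,\mathbf Q,\mathbf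 W)$ and $J(\epsilon,R_1|\mathbf P,\mathbf Q,\mathbf W)$ are defined identically with $W^n_{P^n}(y)$ replaced by $Q^n(y)$. A code for $W^n$ is $\Phi=(N,\phi,\{\mathcal D_i\}_{i=1}^N)$, $\phi:\{1..N\}\to\mathcal X_n$, disjoint $\mathcal D_i\subset\mathcal Y_n$; $|\Phi|=N$; $P_{e,W^n}(\Phi)=\frac1N\sum_i(1-W^n_{\phi(i)}(\mathcal D_i))$. Over all code sequences: $C_p(R_2,R_1|\mathbf W)=\inf\{\limsup_nP_{e,W^n}(\Phi_n):\liminf_n\frac1{n^\beta}(\log|\Phi_n|-nR_1)\ge R_2\}$, $C(\epsilon,R_1|\mathbf W)=\sup\{\liminf_n\frac1{n^\beta}(\log|\Phi_n|-nR_1):\limsup_nP_{e,W^n}(\Phi_n)\le\epsilon\}$. *)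

theory Defs
  imports "HOL-Probability.Probability"
begin

text \<open>Sequences are indexed by
  all n :: nat (index 0 is irrelevant for all limsup/liminf quantities).\<close>

definition is_channel :: "(nat \<Rightarrow> 'x set) \<Rightarrow> (nat \<Rightarrow> 'y set) \<Rightarrow> (nat \<Rightarrow> 'x \<Rightarrow> 'y pmf) \<Rightarrow> bool" where
  "is_channel X Y W \<longleftrightarrow>
     (\<forall>n. countable (X n) \<and> X n \<noteq> {} \<and> countable (Y n) \<and>
          (\<forall>x\<in>X n. set_pmf (W n x) \<subseteq> Y n))"

definition input_seqs :: "(nat \<Rightarrow> 'x set) \<Rightarrow> (nat \<Rightarrow> 'x pmf) set" where
  "input_seqs X = {P. \<forall>n. set_pmf (P n) \<subseteq> X n}"

definition output_seqs :: "(nat \<Rightarrow> 'y set) \<Rightarrow> (nat \<Rightarrow> 'y pmf) set" where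
  "output_seqs Y = {Q. \<forall>n. set_pmf (Q n) \<subseteq> Y n}"

definition out_dist :: "(nat \<Rightarrow> 'x \<Rightarrow> 'y pmf) \<Rightarrow> (nat \<Rightarrow> 'x pmf) \<Rightarrow> nat \<Rightarrow> 'y pmf" where
  "out_dist W P n = bind_pmf (P n) (W n)"

definition Ip :: "real \<Rightarrow> (nat \<Rightarrow> 'x \<Rightarrow> 'y pmf) \<Rightarrow> real \<Rightarrow> real \<Rightarrow> (nat \<Rightarrow> 'x pmf) \<Rightarrow> ereal" where
  "Ip \<beta> W R2 R1 P = limsup (\<lambda>n. ereal (measure_pmf.expectation (P n)
      (\<lambda>x. measure_pmf.prob (W n x)
        {y. (ln (pmf (W n x) y / pmf (out_dist W P n) y) - real n * R1) / real n powr \<beta> < R2})))"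

definition Icap :: "real \<Rightarrow> (nat \<Rightarrow> 'x \<Rightarrow> 'y pmf) \<Rightarrow> real \<Rightarrow> real \<Rightarrow> (nat \<Rightarrow> 'x pmf) \<Rightarrow> ereal" where
  "Icap \<beta> W \<epsilon> R1 P = Sup (ereal ` {R2. Ip \<beta> W R2 R1 P \<le> ereal \<epsilon>})"

text \<open>J_p(R2,R1|P,Q,W): W^n_{P^n}(y) replaced by Q^n(y).  Where Q^n(y) = 0 the
  information density log(W(y)/Q(y)) is +infinity, hence not below R2.\<close>

definition Jp :: "real \<Rightarrow> (nat \<Rightarrow> 'x \<Rightarrow> 'y pmf) \<Rightarrow> real \<Rightarrow> real \<Rightarrow> (nat \<Rightarrow> 'x pmf) \<Rightarrow> (nat \<Rightarrow> 'y pmf) \<Rightarrow> ereal" where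
  "Jp \<beta> W R2 R1 P Q = limsup (\<lambda>n. ereal (measure_pmf.expectation (P n)
      (\<lambda>x. measure_pmf.prob (W n x)
        {y. 0 < pmf (Q n) y \<and>
            (ln (pmf (W n x) y / pmf (Q n) y) - real n * R1) / real n powr \<beta> < R2})))"

definition Jcap :: "real \<Rightarrow> (nat \<Rightarrow> 'x \<Rightarrow> 'y pmf) \<Rightarrow> real \<Rightarrow> real \<Rightarrow> (nat \<Rightarrow> 'x pmf) \<Rightarrow> (nat \<Rightarrow> 'y pmf) \<Rightarrow> ereal" where
  "Jcap \<beta> W \<epsilon> R1 P Q = Sup (ereal ` {R2. Jp \<beta> W R2 R1 P Q \<le> ereal \<epsilon>})"

type_synonym ('x,'y) code = "nat \<times> (nat \<Rightarrow> 'x) \<times> (nat \<Rightarrow> 'y set)"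

definition is_code :: "(nat \<Rightarrow> 'x set) \<Rightarrow> (nat \<Rightarrow> 'y set) \<Rightarrow> nat \<Rightarrow> ('x,'y) code \<Rightarrow> bool" where
  "is_code X Y n c \<longleftrightarrow> (case c of (N, \<phi>, D) \<Rightarrow>
      1 \<le> N \<and> (\<forall>i\<in>{1..N}. \<phi> i \<in> X n \<and> D i \<subseteq> Y n) \<and> disjoint_family_on D {1..N})"

definition code_size :: "('x,'y) code \<Rightarrow> nat" where
  "code_size c = fst c"

definition err_prob :: "(nat \<Rightarrow> 'x \<Rightarrow> 'y pmf) \<Rightarrow> nat \<Rightarrow> ('x,'y) code \<Rightarrow> real" where
  "err_prob W n c = (case c of (N, \<phi>, D) \<Rightarrow>
      (1 / real N) * (\<Sum>i=1..N. 1 - measure_pmf.prob (W n (\<phi> i)) (D i)))"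

definition code_seqs :: "(nat \<Rightarrow> 'x set) \<Rightarrow> (nat \<Rightarrow> 'y set) \<Rightarrow> (nat \<Rightarrow> ('x,'y) code) set" where
  "code_seqs X Y = {\<Phi>. \<forall>n. is_code X Y n (\<Phi> n)}"

definition second_order_rate :: "real \<Rightarrow> real \<Rightarrow> (nat \<Rightarrow> ('x,'y) code) \<Rightarrow> ereal" where
  "second_order_rate \<beta> R1 \<Phi> =
     liminf (\<lambda>n. ereal ((ln (real (code_size (\<Phi> n))) - real n * R1) / real n powr \<beta>))"

definition Cp :: "real \<Rightarrow> (nat \<Rightarrow> 'x set) \<Rightarrow> (nat \<Rightarrow> 'y set) \<Rightarrow> (nat \<Rightarrow> 'x \<Rightarrow> 'y pmf) \<Rightarrow> real \<Rightarrow> real \<Rightarrow> ereal" where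
  "Cp \<beta> X Y W R2 R1 = Inf {limsup (\<lambda>n. ereal (err_prob W n (\<Phi> n))) | \<Phi>.
      \<Phi> \<in> code_seqs X Y \<and> ereal R2 \<le> second_order_rate \<beta> R1 \<Phi>}"

definition Ccap :: "real \<Rightarrow> (nat \<Rightarrow> 'x set) \<Rightarrow> (nat \<Rightarrow> 'y set) \<Rightarrow> (nat \<Rightarrow> 'x \<Rightarrow> 'y pmf) \<Rightarrow> real \<Rightarrow> real \<Rightarrow> ereal" where
  "Ccap \<beta> X Y W \<epsilon> R1 = Sup {second_order_rate \<beta> R1 \<Phi> | \<Phi>.
      \<Phi> \<in> code_seqs X Y \<and> limsup (\<lambda>n. ereal (err_prob W n (\<Phi> n))) \<le> ereal \<epsilon>}"

end

theory Submission
  imports Defs "HOL-Real_Asymp.Real_Asymp"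
begin

(* Both characterizations follow from two one-shot bounds, applied blockwise and then pushed
   through limsup/liminf on the scale n^beta:
   - Converse (Verdu-Han): for a code with N codewords, any output distribution Q and any a,
       E_{uniform codeword} W(ln(W/Q) < a) <= error + e^a / N.
     Taking the empirical input distribution of a code sequence, this bounds J_p (hence I_p)
     at every rate below the code's second-order rate by the code's asymptotic error.
   - Achievability (Feinstein): for any input distribution P and any N, a greedy code exists with
       error <= E_P W(ln(W/W_P) <= a) + N e^(-a).
     With ln N ~ n R1 + n^beta (R2 - 3 theta) and a = ln N + theta n^beta the second term
     vanishes; for C_p the slack theta must tend to 0, chosen by a diagonal argument.
   Since J_p with Q = W_P is I_p, the chains C_p <= inf I <= inf sup J <= C_p and
   C <= sup inf J <= sup I <= C close, which is the theorem. *)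

lemma prob_le_scaled_prob:
  assumes "\<And>y. y \<in> A \<Longrightarrow> pmf p y \<le> c * pmf q y" and "0 \<le> c"
  shows "measure_pmf.prob p A \<le> c * measure_pmf.prob q A"
proof -
  have "measure_pmf.prob p A = infsetsum (pmf p) A" by (rule measure_pmf_conv_infsetsum)
  also have "\<dots> \<le> infsetsum (\<lambda>y. c * pmf q y) A"
    by (rule infsetsum_mono) (auto intro!: abs_summable_on_cmult_right assms)
  also have "\<dots> = c * infsetsum (pmf q) A" by (rule infsetsum_cmult_right) auto
  finally show ?thesis by (simp add: measure_pmf_conv_infsetsum)
qed

lemma prob_drop_support_condition:
  assumes "\<And>y. y \<in> set_pmf p \<Longrightarrow> C y"
  shows "measure_pmf.prob p {y. C y \<and> S y} = measure_pmf.prob p {y. S y}"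
proof -
  have "{y. C y \<and> S y} \<inter> set_pmf p = {y. S y} \<inter> set_pmf p" using assms by blast
  then show ?thesis by (metis measure_Int_set_pmf)
qed

lemma integrable_channel_prob:
  "integrable (measure_pmf p) (\<lambda>x. measure_pmf.prob (W x) (A x))"
  by (rule measure_pmf.integrable_const_bound[where B=1]) auto

lemma prob_bind_pmf:
  "measure_pmf.prob (bind_pmf P W) A = measure_pmf.expectation P (\<lambda>x. measure_pmf.prob (W x) A)"
  using measurable_measure_pmf[of W]
  unfolding measure_pmf_bind
  by (subst measure_pmf.measure_bind[where N="count_space UNIV"]) auto

lemma limsup_le_plus_null:
  fixes f g e :: "nat \<Rightarrow> real"
  assumes "e \<longlonglongrightarrow> 0" and "eventually (\<lambda>n. f n \<le> g n + e n) sequentially"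
  shows "limsup (\<lambda>n. ereal (f n)) \<le> limsup (\<lambda>n. ereal (g n))"
proof -
  have "limsup (\<lambda>n. ereal (f n)) \<le> limsup (\<lambda>n. ereal (e n) + ereal (g n))"
    by (rule Limsup_mono) (use assms(2) in \<open>auto elim!: eventually_mono simp: add.commute\<close>)
  also have "\<dots> = 0 + limsup (\<lambda>n. ereal (g n))"
    by (rule ereal_limsup_lim_add) (use assms(1) in \<open>auto simp: zero_ereal_def\<close>)
  finally show ?thesis by simp
qed

lemma diagonal_eventually:
  fixes Pk :: "nat \<Rightarrow> nat \<Rightarrow> bool"
  assumes "\<And>k. eventually (Pk k) sequentially"
  shows "\<exists>kn. filterlim kn at_top sequentially \<and> eventually (\<lambda>n. Pk (kn n) n) sequentially"
proof -
  define Q where "Q k n = (\<forall>j\<in>{..k}. Pk j n)" for k n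
  have "eventually (Q k) sequentially" for k
    unfolding Q_def by (rule eventually_ball_finite) (use assms in auto)
  then have "\<exists>m. \<forall>n\<ge>m. Q k n" for k by (simp add: eventually_sequentially)
  then obtain N where NQ: "\<And>k n. N k \<le> n \<Longrightarrow> Q k n" by metis
  define kn where "kn n = Max {k. k \<le> n \<and> N k \<le> n}" for n
  have kn_ge: "K \<le> kn n" if "K \<le> n" "N K \<le> n" for K n
    unfolding kn_def by (rule Max_ge) (use that in auto)
  have "filterlim kn at_top sequentially"
    unfolding filterlim_at_top eventually_sequentially by (auto intro!: exI[of _ "max _ (N _)"] kn_ge)
  moreover have "Pk (kn n) n" if n: "N 0 \<le> n" for n
  proof -
    have "kn n \<in> {k. k \<le> n \<and> N k \<le> n}"
      unfolding kn_def by (rule Max_in) (use n in \<open>auto intro!: exI[of _ 0]\<close>)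
    then show ?thesis using NQ unfolding Q_def by auto
  qed
  then have "eventually (\<lambda>n. Pk (kn n) n) sequentially" by (auto simp: eventually_sequentially)
  ultimately show ?thesis by blast
qed

lemma Lim_left_of_mono:
  fixes h :: "real \<Rightarrow> ereal"
  assumes mono: "\<And>a b. a \<le> b \<Longrightarrow> h a \<le> h b"
  shows "Lim (at_right 0) (\<lambda>\<gamma>. h (R - \<gamma>)) = (SUP \<gamma>\<in>{0<..}. h (R - \<gamma>))"
proof (rule tendsto_Lim)
  define S where "S = (SUP \<gamma>\<in>{0<..}. h (R - \<gamma>))"
  show "((\<lambda>\<gamma>. h (R - \<gamma>)) \<longlongrightarrow> S) (at_right 0)"
  proof (rule order_tendstoI)
    fix y assume "y < S"
    then obtain g where g: "0 < g" "y < h (R - g)" unfolding S_def less_SUP_iff by auto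
    have "eventually (\<lambda>\<gamma>. \<gamma> < g) (at_right (0::real))"
      using g(1) eventually_at_right_less order_tendstoD(2) tendsto_ident_at by blast
    then show "eventually (\<lambda>\<gamma>. y < h (R - \<gamma>)) (at_right 0)"
    proof (rule eventually_mono)
      fix \<gamma> :: real assume "\<gamma> < g"
      then have "h (R - g) \<le> h (R - \<gamma>)" by (intro mono) simp
      then show "y < h (R - \<gamma>)" using g by simp
    qed
  next
    fix y assume "S < y"
    have "eventually (\<lambda>\<gamma>. 0 < \<gamma>) (at_right (0::real))" by (simp add: eventually_at_right_less)
    then show "eventually (\<lambda>\<gamma>. h (R - \<gamma>) < y) (at_right 0)"
    proof (rule eventually_mono)
      fix \<gamma> :: real assume "0 < \<gamma>"
      then have "h (R - \<gamma>) \<le> S" unfolding S_def by (intro SUP_upper) simp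
      then show "h (R - \<gamma>) < y" using \<open>S < y\<close> by simp
    qed
  qed
qed simp

section \<open>Information spectra\<close>

definition info_spectrum ::
    "real \<Rightarrow> (nat \<Rightarrow> 'x \<Rightarrow> 'y pmf) \<Rightarrow> real \<Rightarrow> (nat \<Rightarrow> 'x pmf) \<Rightarrow> nat \<Rightarrow> real \<Rightarrow> real" where
  "info_spectrum \<beta> W R1 P n c = measure_pmf.expectation (P n) (\<lambda>x. measure_pmf.prob (W n x)
        {y. (ln (pmf (W n x) y / pmf (out_dist W P n) y) - real n * R1) / real n powr \<beta> < c})"

lemma Ip_eq_limsup_info_spectrum:
  "Ip \<beta> W c R1 P = limsup (\<lambda>n. ereal (info_spectrum \<beta> W R1 P n c))"
  by (simp add: Ip_def info_spectrum_def)

lemma info_spectrum_bounds: "0 \<le> info_spectrum \<beta> W R1 P n c" "info_spectrum \<beta> W R1 P n c \<le> 1"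
proof -
  show "0 \<le> info_spectrum \<beta> W R1 P n c"
    unfolding info_spectrum_def by (rule integral_nonneg_AE) auto
  have "info_spectrum \<beta> W R1 P n c \<le> measure_pmf.expectation (P n) (\<lambda>x. 1)"
    unfolding info_spectrum_def by (rule integral_mono) (auto intro: integrable_channel_prob)
  then show "info_spectrum \<beta> W R1 P n c \<le> 1" by simp
qed

lemma Ip_bounds: "0 \<le> Ip \<beta> W c R1 P" "Ip \<beta> W c R1 P \<le> 1"
proof -
  have "limsup (\<lambda>n. ereal 0) \<le> limsup (\<lambda>n. ereal (info_spectrum \<beta> W R1 P n c))"
    by (rule Limsup_mono) (simp add: info_spectrum_bounds)
  then show "0 \<le> Ip \<beta> W c R1 P"
    unfolding Ip_eq_limsup_info_spectrum by (simp add: Limsup_const zero_ereal_def)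
  have "limsup (\<lambda>n. ereal (info_spectrum \<beta> W R1 P n c)) \<le> limsup (\<lambda>n. ereal 1)"
    by (rule Limsup_mono) (simp add: info_spectrum_bounds)
  then show "Ip \<beta> W c R1 P \<le> 1"
    unfolding Ip_eq_limsup_info_spectrum by (simp add: Limsup_const one_ereal_def)
qed

lemma Ip_mono: "a \<le> b \<Longrightarrow> Ip \<beta> W a R1 P \<le> Ip \<beta> W b R1 P"
  unfolding Ip_def
  by (intro Limsup_mono always_eventually allI ereal_less_eq(3)[THEN iffD2] integral_mono
        integrable_channel_prob measure_pmf.finite_measure_mono) auto

lemma Jp_mono: "a \<le> b \<Longrightarrow> Jp \<beta> W a R1 P Q \<le> Jp \<beta> W b R1 P Q"
  unfolding Jp_def
  by (intro Limsup_mono always_eventually allI ereal_less_eq(3)[THEN iffD2] integral_mono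
        integrable_channel_prob measure_pmf.finite_measure_mono) auto

lemma Lim_Ip: "Lim (at_right 0) (\<lambda>\<gamma>. Ip \<beta> W (R - \<gamma>) R1 P) = (SUP \<gamma>\<in>{0<..}. Ip \<beta> W (R - \<gamma>) R1 P)"
  by (rule Lim_left_of_mono) (rule Ip_mono)

lemma Lim_Jp: "Lim (at_right 0) (\<lambda>\<gamma>. Jp \<beta> W (R - \<gamma>) R1 P Q) = (SUP \<gamma>\<in>{0<..}. Jp \<beta> W (R - \<gamma>) R1 P Q)"
  by (rule Lim_left_of_mono) (rule Jp_mono)

text \<open>With the true output distribution as reference, \<open>Jp\<close> is \<open>Ip\<close>: the side condition
  \<open>0 < W_P(y)\<close> holds on the support of every row \<open>W_x\<close> with \<open>x\<close> in the support of \<open>P\<close>.\<close>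

lemma Jp_out_dist: "Jp \<beta> W R2 R1 P (out_dist W P) = Ip \<beta> W R2 R1 P"
proof -
  have "measure_pmf.expectation (P n) (\<lambda>x. measure_pmf.prob (W n x)
        {y. 0 < pmf (out_dist W P n) y \<and>
            (ln (pmf (W n x) y / pmf (out_dist W P n) y) - real n * R1) / real n powr \<beta> < R2}) =
    measure_pmf.expectation (P n) (\<lambda>x. measure_pmf.prob (W n x)
        {y. (ln (pmf (W n x) y / pmf (out_dist W P n) y) - real n * R1) / real n powr \<beta> < R2})" for n
  proof (rule integral_cong_AE)
    show "AE x in measure_pmf (P n). measure_pmf.prob (W n x)
        {y. 0 < pmf (out_dist W P n) y \<and>
            (ln (pmf (W n x) y / pmf (out_dist W P n) y) - real n * R1) / real n powr \<beta> < R2} =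
      measure_pmf.prob (W n x)
        {y. (ln (pmf (W n x) y / pmf (out_dist W P n) y) - real n * R1) / real n powr \<beta> < R2}"
      unfolding AE_measure_pmf_iff
    proof (intro ballI prob_drop_support_condition)
      fix x y assume "x \<in> set_pmf (P n)" and "y \<in> set_pmf (W n x)"
      then have "y \<in> set_pmf (out_dist W P n)" by (auto simp: out_dist_def set_bind_pmf)
      then show "0 < pmf (out_dist W P n) y" by (simp add: pmf_positive)
    qed
  qed simp_all
  then show ?thesis unfolding Jp_def Ip_def by simp
qed

lemma out_dist_output:
  assumes "is_channel X Y W" and "P \<in> input_seqs X"
  shows "out_dist W P \<in> output_seqs Y"
  using assms unfolding output_seqs_def input_seqs_def is_channel_def out_dist_def
  by (auto simp: set_bind_pmf)

section \<open>Converse: the Verdu-Han bound\<close>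

text \<open>Single codeword: outputs where the density ratio \<open>W/Q\<close> is below \<open>e^a\<close> are either
  decoding errors, or lie in the decoding set, whose \<open>Q\<close>-mass they bound from below.\<close>

lemma verdu_han_codeword:
  fixes W Q :: "'y pmf"
  shows "measure_pmf.prob W {y. 0 < pmf Q y \<and> ln (pmf W y / pmf Q y) < a}
         \<le> exp a * measure_pmf.prob Q D + (1 - measure_pmf.prob W D)"
proof -
  define A where "A = {y. 0 < pmf Q y \<and> ln (pmf W y / pmf Q y) < a}"
  have density: "pmf W y \<le> exp a * pmf Q y" if "y \<in> A \<inter> D" for y
  proof (cases "pmf W y = 0")
    case False
    then have "0 < pmf W y / pmf Q y" using that by (auto simp: A_def pmf_nonneg order_neq_le_trans)
    then have "pmf W y / pmf Q y < exp a"
      using that by (metis (no_types, lifting) A_def IntD1 exp_less_mono exp_ln mem_Collect_eq)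
    then show ?thesis using that by (auto simp: A_def field_simps)
  qed simp
  have "measure_pmf.prob W A \<le> measure_pmf.prob W (A \<inter> D) + measure_pmf.prob W (UNIV - D)"
    by (rule order_trans[OF measure_pmf.finite_measure_mono measure_Un_le]) auto
  also have "measure_pmf.prob W (A \<inter> D) \<le> exp a * measure_pmf.prob Q (A \<inter> D)"
    by (rule prob_le_scaled_prob) (use density in auto)
  also have "\<dots> \<le> exp a * measure_pmf.prob Q D"
    by (intro mult_left_mono measure_pmf.finite_measure_mono) auto
  also have "measure_pmf.prob W (UNIV - D) = 1 - measure_pmf.prob W D"
    using measure_pmf.prob_compl[of D W] by simp
  finally show ?thesis unfolding A_def by simp
qed

text \<open>Averaging over a code: since the decoding sets are disjoint, their \<open>Q\<close>-masses sum to
  at most one, giving the one-shot converse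
  \<open>E_{codeword} W(ln(W/Q) < a) \<le> error + e^a / N\<close>.\<close>

lemma verdu_han_one_shot:
  fixes W :: "'x \<Rightarrow> 'y pmf" and \<phi> :: "nat \<Rightarrow> 'x" and D :: "nat \<Rightarrow> 'y set" and Q :: "'y pmf"
  assumes N: "1 \<le> N" and disj: "disjoint_family_on D {1..N}"
  shows "(\<Sum>i=1..N. measure_pmf.prob (W (\<phi> i)) {y. 0 < pmf Q y \<and> ln (pmf (W (\<phi> i)) y / pmf Q y) < a})
           / real N
         \<le> (1 / real N) * (\<Sum>i=1..N. 1 - measure_pmf.prob (W (\<phi> i)) (D i)) + exp a / real N"
proof -
  have "(\<Sum>i=1..N. measure_pmf.prob Q (D i)) = measure_pmf.prob Q (\<Union>i\<in>{1..N}. D i)"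
    by (rule measure_pmf.finite_measure_finite_Union[symmetric]) (use disj in auto)
  then have mass: "(\<Sum>i=1..N. measure_pmf.prob Q (D i)) \<le> 1" by simp
  have "(\<Sum>i=1..N. measure_pmf.prob (W (\<phi> i)) {y. 0 < pmf Q y \<and> ln (pmf (W (\<phi> i)) y / pmf Q y) < a})
      \<le> (\<Sum>i=1..N. exp a * measure_pmf.prob Q (D i) + (1 - measure_pmf.prob (W (\<phi> i)) (D i)))"
    by (rule sum_mono) (rule verdu_han_codeword)
  also have "\<dots> = exp a * (\<Sum>i=1..N. measure_pmf.prob Q (D i))
                   + (\<Sum>i=1..N. 1 - measure_pmf.prob (W (\<phi> i)) (D i))"
    by (simp add: sum.distrib sum_distrib_left)
  also have "\<dots> \<le> exp a + (\<Sum>i=1..N. 1 - measure_pmf.prob (W (\<phi> i)) (D i))"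
    using mult_left_mono[OF mass, of "exp a"] by simp
  finally have "(\<Sum>i=1..N. measure_pmf.prob (W (\<phi> i)) {y. 0 < pmf Q y \<and> ln (pmf (W (\<phi> i)) y / pmf Q y) < a})
      / real N \<le> (exp a + (\<Sum>i=1..N. 1 - measure_pmf.prob (W (\<phi> i)) (D i))) / real N"
    by (rule divide_right_mono) simp
  then show ?thesis by (simp add: add_divide_distrib)
qed

definition codeword_dist :: "(nat \<Rightarrow> ('x,'y) code) \<Rightarrow> nat \<Rightarrow> 'x pmf" where
  "codeword_dist \<Phi> n = map_pmf (fst (snd (\<Phi> n))) (pmf_of_set {1..fst (\<Phi> n)})"

lemma codeword_dist_input:
  assumes "\<Phi> \<in> code_seqs X Y"
  shows "codeword_dist \<Phi> \<in> input_seqs X"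
  unfolding input_seqs_def
proof safe
  fix n x assume x: "x \<in> set_pmf (codeword_dist \<Phi> n)"
  obtain N \<phi> D where e: "\<Phi> n = (N, \<phi>, D)" by (cases "\<Phi> n") auto
  have "is_code X Y n (\<Phi> n)" using assms by (simp add: code_seqs_def)
  with e have "1 \<le> N" "\<forall>i\<in>{1..N}. \<phi> i \<in> X n" by (auto simp: is_code_def)
  then show "x \<in> X n" using x e by (auto simp: codeword_dist_def)
qed

lemma converse_blocklength:
  fixes W :: "nat \<Rightarrow> 'x \<Rightarrow> 'y pmf"
  assumes code: "is_code X Y n (\<Phi> n)" and t: "0 < real n powr \<beta>"
    and rate: "z < (ln (real (code_size (\<Phi> n))) - real n * R1) / real n powr \<beta>"
  shows "measure_pmf.expectation (codeword_dist \<Phi> n) (\<lambda>x. measure_pmf.prob (W n x)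
        {y. 0 < pmf (Q n) y \<and> (ln (pmf (W n x) y / pmf (Q n) y) - real n * R1) / real n powr \<beta> < r})
     \<le> err_prob W n (\<Phi> n) + exp (- (z - r) * real n powr \<beta>)"
proof -
  obtain N \<phi> D where e: "\<Phi> n = (N, \<phi>, D)" by (cases "\<Phi> n") auto
  define t where "t = real n powr \<beta>"
  have tp: "0 < t" using t by (simp add: t_def)
  from code e have N: "1 \<le> N" and disj: "disjoint_family_on D {1..N}" by (auto simp: is_code_def)
  define a where "a = real n * R1 + t * r"
  have event_eq: "{y. 0 < pmf (Q n) y \<and> (ln (pmf (W n x) y / pmf (Q n) y) - real n * R1) / t < r}
      = {y. 0 < pmf (Q n) y \<and> ln (pmf (W n x) y / pmf (Q n) y) < a}" for x
    using tp by (auto simp: a_def pos_divide_less_eq algebra_simps)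
  have "real n * R1 + t * z < ln (real N)"
    using rate tp by (simp add: e code_size_def t_def[symmetric] less_divide_eq algebra_simps)
  then have "exp (real n * R1 + t * z) < real N"
    using N by (metis exp_less_cancel_iff exp_ln of_nat_0_less_iff less_le_trans zero_less_one of_nat_1 of_nat_le_iff)
  then have "exp a / real N \<le> exp a / exp (real n * R1 + t * z)"
    using N by (intro divide_left_mono) auto
  also have "\<dots> = exp (- (z - r) * t)" by (simp add: a_def exp_diff[symmetric] algebra_simps)
  finally have small: "exp a / real N \<le> exp (- (z - r) * t)" .
  have "measure_pmf.expectation (codeword_dist \<Phi> n) (\<lambda>x. measure_pmf.prob (W n x)
        {y. 0 < pmf (Q n) y \<and> (ln (pmf (W n x) y / pmf (Q n) y) - real n * R1) / t < r})
      = (\<Sum>i=1..N. measure_pmf.prob (W n (\<phi> i)) {y. 0 < pmf (Q n) y \<and> ln (pmf (W n (\<phi> i)) y / pmf (Q n) y) < a})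
          / real N"
    using N unfolding codeword_dist_def e event_eq by (simp add: integral_pmf_of_set)
  also have "\<dots> \<le> err_prob W n (\<Phi> n) + exp a / real N"
    using verdu_han_one_shot[OF N disj] by (simp add: e err_prob_def)
  finally show ?thesis using small by (simp add: t_def)
qed

lemma converse_below_rate:
  fixes W :: "nat \<Rightarrow> 'x \<Rightarrow> 'y pmf"
  assumes b: "0 < \<beta>" and \<Phi>: "\<Phi> \<in> code_seqs X Y" and r: "ereal r < second_order_rate \<beta> R1 \<Phi>"
  shows "Jp \<beta> W r R1 (codeword_dist \<Phi>) Q \<le> limsup (\<lambda>n. ereal (err_prob W n (\<Phi> n)))"
proof -
  obtain z where z: "ereal r < ereal z" "ereal z < second_order_rate \<beta> R1 \<Phi>"
    using ereal_dense2[OF r] by blast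
  then have rz: "0 < z - r" by simp
  have ev: "eventually (\<lambda>n. z < (ln (real (code_size (\<Phi> n))) - real n * R1) / real n powr \<beta>) sequentially"
    using less_LiminfD[OF z(2)[unfolded second_order_rate_def]] by simp
  have null: "(\<lambda>n. exp (- (z - r) * real n powr \<beta>)) \<longlonglongrightarrow> 0"
    using b rz by real_asymp
  show ?thesis unfolding Jp_def
  proof (rule limsup_le_plus_null[OF null])
    show "\<forall>\<^sub>F n in sequentially. measure_pmf.expectation (codeword_dist \<Phi> n) (\<lambda>x. measure_pmf.prob (W n x)
        {y. 0 < pmf (Q n) y \<and> (ln (pmf (W n x) y / pmf (Q n) y) - real n * R1) / real n powr \<beta> < r})
     \<le> err_prob W n (\<Phi> n) + exp (- (z - r) * real n powr \<beta>)"
      using ev eventually_ge_at_top[of 1]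
      by eventually_elim (rule converse_blocklength, use \<Phi> in \<open>auto simp: code_seqs_def\<close>)
  qed
qed

lemma converse_Cp:
  fixes W :: "nat \<Rightarrow> 'x \<Rightarrow> 'y pmf"
  assumes b: "0 < \<beta>" and \<Phi>: "\<Phi> \<in> code_seqs X Y" and r: "ereal R2 \<le> second_order_rate \<beta> R1 \<Phi>"
  shows "Lim (at_right 0) (\<lambda>\<gamma>. Jp \<beta> W (R2 - \<gamma>) R1 (codeword_dist \<Phi>) Q)
           \<le> limsup (\<lambda>n. ereal (err_prob W n (\<Phi> n)))"
  unfolding Lim_Jp
proof (rule SUP_least)
  fix \<gamma> :: real assume "\<gamma> \<in> {0<..}"
  then have "ereal (R2 - \<gamma>) < ereal R2" by simp
  then have "ereal (R2 - \<gamma>) < second_order_rate \<beta> R1 \<Phi>" using r by (rule order.strict_trans2)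
  then show "Jp \<beta> W (R2 - \<gamma>) R1 (codeword_dist \<Phi>) Q \<le> limsup (\<lambda>n. ereal (err_prob W n (\<Phi> n)))"
    by (rule converse_below_rate[OF b \<Phi>])
qed

lemma converse_Ccap:
  fixes W :: "nat \<Rightarrow> 'x \<Rightarrow> 'y pmf"
  assumes b: "0 < \<beta>" and \<Phi>: "\<Phi> \<in> code_seqs X Y"
    and err: "limsup (\<lambda>n. ereal (err_prob W n (\<Phi> n))) \<le> ereal \<epsilon>"
  shows "second_order_rate \<beta> R1 \<Phi> \<le> Jcap \<beta> W \<epsilon> R1 (codeword_dist \<Phi>) Q"
proof (rule dense_le)
  fix x assume x: "x < second_order_rate \<beta> R1 \<Phi>"
  show "x \<le> Jcap \<beta> W \<epsilon> R1 (codeword_dist \<Phi>) Q"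
  proof (cases x)
    case (real r)
    have "Jp \<beta> W r R1 (codeword_dist \<Phi>) Q \<le> ereal \<epsilon>"
      using converse_below_rate[OF b \<Phi>, of r] x err real by (meson order.trans)
    then show ?thesis unfolding Jcap_def real by (intro Sup_upper) auto
  qed (use x in auto)
qed

section \<open>Achievability: Feinstein's lemma\<close>

lemma greedy_sequence:
  fixes N :: nat
  assumes step: "\<And>M f. M < N \<Longrightarrow> \<exists>x. A x \<and> B x (\<Union>j<M. G (f j))"
  shows "\<exists>f. \<forall>i<N. A (f i) \<and> B (f i) (\<Union>j<i. G (f j))"
proof -
  have "M \<le> N \<Longrightarrow> \<exists>f. \<forall>i<M. A (f i) \<and> B (f i) (\<Union>j<i. G (f j))" for M
  proof (induction M)
    case (Suc M)
    then obtain f where f: "\<forall>i<M. A (f i) \<and> B (f i) (\<Union>j<i. G (f j))" by auto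
    obtain x where x: "A x" "B x (\<Union>j<M. G (f j))" using step[of M f] Suc.prems by auto
    have prefix: "(\<Union>j<i. G ((f(M := x)) j)) = (\<Union>j<i. G (f j))" if "i \<le> M" for i
      using that by auto
    have "\<forall>i<Suc M. A ((f(M := x)) i) \<and> B ((f(M := x)) i) (\<Union>j<i. G ((f(M := x)) j))"
      using f x prefix by (auto simp: less_Suc_eq)
    then show ?case by blast
  qed simp
  then show ?thesis by blast
qed

definition dense_outputs :: "('x \<Rightarrow> 'y pmf) \<Rightarrow> 'y pmf \<Rightarrow> real \<Rightarrow> 'x \<Rightarrow> 'y set" where
  "dense_outputs W Q a x = {y \<in> set_pmf (W x). a < ln (pmf (W x) y / pmf Q y)}"

lemma prob_dense_outputs: "measure_pmf.prob Q (dense_outputs W Q a x) \<le> exp (- a)"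
proof -
  have "measure_pmf.prob Q (dense_outputs W Q a x) \<le> exp (- a) * measure_pmf.prob (W x) (dense_outputs W Q a x)"
  proof (rule prob_le_scaled_prob)
    fix y assume y: "y \<in> dense_outputs W Q a x"
    show "pmf Q y \<le> exp (- a) * pmf (W x) y"
    proof (cases "pmf Q y = 0")
      case False
      then have q: "0 < pmf Q y" by (simp add: order_neq_le_trans)
      have w: "0 < pmf (W x) y" using y by (simp add: dense_outputs_def pmf_positive)
      have "exp a < exp (ln (pmf (W x) y / pmf Q y))" using y by (simp add: dense_outputs_def)
      then have "exp a * pmf Q y < pmf (W x) y" using q w by (simp add: field_simps)
      then show ?thesis by (simp add: exp_minus field_simps)
    qed simp
  qed simp
  also have "\<dots> \<le> exp (- a)" by simp
  finally show ?thesis .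
qed

lemma prob_dense_outputs_channel:
  "measure_pmf.prob (W x) (dense_outputs W Q a x)
     = 1 - measure_pmf.prob (W x) {y. ln (pmf (W x) y / pmf Q y) \<le> a}"
proof -
  have "dense_outputs W Q a x = (UNIV - {y. ln (pmf (W x) y / pmf Q y) \<le> a}) \<inter> set_pmf (W x)"
    by (auto simp: dense_outputs_def)
  then show ?thesis
    using measure_pmf.prob_compl[of "{y. ln (pmf (W x) y / pmf Q y) \<le> a}" "W x"]
    by (simp add: measure_Int_set_pmf)
qed

text \<open>Otherwise averaging over \<open>P\<close> contradicts \<open>E_P W_x(G_x) = 1 - F\<close>.\<close>

lemma feinstein_step:
  fixes W :: "'x \<Rightarrow> 'y pmf" and P :: "'x pmf" and a :: real
  defines "WP \<equiv> bind_pmf P W"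
  defines "F \<equiv> measure_pmf.expectation P (\<lambda>x. measure_pmf.prob (W x) {y. ln (pmf (W x) y / pmf WP y) \<le> a})"
  assumes U: "measure_pmf.prob WP U \<le> real M * exp (- a)" and M: "M < N"
  shows "\<exists>x\<in>set_pmf P. 1 - measure_pmf.prob (W x) (dense_outputs W WP a x - U) \<le> F + real N * exp (- a)"
proof (rule ccontr)
  define \<tau> where "\<tau> = F + real N * exp (- a)"
  assume "\<not> ?thesis"
  then have bad: "measure_pmf.prob (W x) (dense_outputs W WP a x - U) \<le> 1 - \<tau>" if "x \<in> set_pmf P" for x
    using that unfolding \<tau>_def by force
  have split: "measure_pmf.prob (W x) (dense_outputs W WP a x)
      \<le> measure_pmf.prob (W x) U + measure_pmf.prob (W x) (dense_outputs W WP a x - U)" for x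
    by (rule order_trans[OF measure_pmf.finite_measure_mono measure_Un_le]) auto
  have "1 - F = measure_pmf.expectation P (\<lambda>x. measure_pmf.prob (W x) (dense_outputs W WP a x))"
    unfolding prob_dense_outputs_channel F_def
    by (subst Bochner_Integration.integral_diff) (auto simp: integrable_channel_prob)
  also have "\<dots> \<le> measure_pmf.expectation P (\<lambda>x. measure_pmf.prob (W x) U + (1 - \<tau>))"
  proof (rule integral_mono_AE)
    show "AE x in measure_pmf P. measure_pmf.prob (W x) (dense_outputs W WP a x)
        \<le> measure_pmf.prob (W x) U + (1 - \<tau>)"
      unfolding AE_measure_pmf_iff using split bad by (meson add_left_mono order_trans)
  qed (auto intro!: integrable_channel_prob)
  also have "\<dots> = measure_pmf.prob WP U + (1 - \<tau>)"
    by (subst Bochner_Integration.integral_add) (auto intro!: integrable_channel_prob simp: WP_def prob_bind_pmf)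
  finally have "real N * exp (- a) \<le> real M * exp (- a)" using U unfolding \<tau>_def by linarith
  then show False using M by simp
qed

lemma greedy_code:
  assumes N: "1 \<le> N" and fX: "\<And>i. i < N \<Longrightarrow> f i \<in> X n" and GY: "\<And>i. i < N \<Longrightarrow> G (f i) \<subseteq> Y n"
    and err: "\<And>i. i < N \<Longrightarrow> 1 - measure_pmf.prob (W n (f i)) (G (f i) - (\<Union>j<i. G (f j))) \<le> \<tau>"
  shows "\<exists>c. is_code X Y n c \<and> code_size c = N \<and> err_prob W n c \<le> \<tau>"
proof -
  define \<phi> where "\<phi> i = f (i - 1)" for i
  define D where "D i = G (f (i - 1)) - (\<Union>j<i - 1. G (f j))" for i
  have "is_code X Y n (N, \<phi>, D)"
    unfolding is_code_def prod.case
  proof (intro conjI ballI)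
    fix i assume i: "i \<in> {1..N}"
    then have "i - 1 < N" by auto
    then show "\<phi> i \<in> X n" "D i \<subseteq> Y n" using fX GY by (auto simp: \<phi>_def D_def)
  next
    have "D i \<inter> D j = {}" if "i < j" "1 \<le> i" for i j
    proof -
      have "D i \<subseteq> G (f (i - 1))" by (auto simp: D_def)
      moreover have "i - 1 < j - 1" using that by simp
      then have "D j \<inter> G (f (i - 1)) = {}" by (auto simp: D_def)
      ultimately show ?thesis by blast
    qed
    then show "disjoint_family_on D {1..N}"
      unfolding disjoint_family_on_def by (metis Int_commute atLeastAtMost_iff linorder_neqE_nat)
  qed (rule N)
  moreover have "err_prob W n (N, \<phi>, D) \<le> \<tau>"
  proof -
    have "(\<Sum>i=1..N. 1 - measure_pmf.prob (W n (\<phi> i)) (D i)) \<le> (\<Sum>i=1..N. \<tau>)"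
      by (rule sum_mono) (use err in \<open>auto simp: \<phi>_def D_def\<close>)
    then show ?thesis using N by (simp add: err_prob_def divide_le_eq mult.commute)
  qed
  ultimately show ?thesis by (intro exI[of _ "(N, \<phi>, D)"]) (simp add: code_size_def)
qed

text \<open>The
  decoding set of codeword \<open>i\<close> is its dense set minus those of earlier codewords.\<close>

lemma feinstein_code:
  fixes W :: "nat \<Rightarrow> 'x \<Rightarrow> 'y pmf"
  assumes ch: "is_channel X Y W" and P: "set_pmf P \<subseteq> X n" and N: "1 \<le> N"
  shows "\<exists>c. is_code X Y n c \<and> code_size c = N \<and> err_prob W n c \<le>
     measure_pmf.expectation P (\<lambda>x. measure_pmf.prob (W n x)
        {y. ln (pmf (W n x) y / pmf (bind_pmf P (W n)) y) \<le> a})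
     + real N * exp (- a)"
proof -
  define G where "G = dense_outputs (W n) (bind_pmf P (W n)) a"
  define \<tau> where "\<tau> = measure_pmf.expectation P (\<lambda>x. measure_pmf.prob (W n x)
        {y. ln (pmf (W n x) y / pmf (bind_pmf P (W n)) y) \<le> a}) + real N * exp (- a)"
  have "\<exists>x. x \<in> set_pmf P \<and> 1 - measure_pmf.prob (W n x) (G x - (\<Union>j<M. G (f j))) \<le> \<tau>"
    if "M < N" for M f
  proof -
    have "measure_pmf.prob (bind_pmf P (W n)) (\<Union>j<M. G (f j)) \<le> (\<Sum>j<M. measure_pmf.prob (bind_pmf P (W n)) (G (f j)))"
      by (rule measure_pmf.finite_measure_subadditive_finite) auto
    also have "\<dots> \<le> (\<Sum>j<M. exp (- a))"
      unfolding G_def by (intro sum_mono prob_dense_outputs)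
    also have "\<dots> = real M * exp (- a)" by simp
    finally show ?thesis using feinstein_step[OF _ that] unfolding G_def \<tau>_def by blast
  qed
  then obtain f where f: "\<forall>i<N. f i \<in> set_pmf P \<and> 1 - measure_pmf.prob (W n (f i)) (G (f i) - (\<Union>j<i. G (f j))) \<le> \<tau>"
    using greedy_sequence[where A="\<lambda>x. x \<in> set_pmf P" and G=G
            and B="\<lambda>x U. 1 - measure_pmf.prob (W n x) (G x - U) \<le> \<tau>"] by blast
  have codewords: "f i \<in> X n" "G (f i) \<subseteq> Y n" if "i < N" for i
  proof -
    show fX: "f i \<in> X n" using f P that by auto
    have "G (f i) \<subseteq> set_pmf (W n (f i))" by (auto simp: G_def dense_outputs_def)
    also have "\<dots> \<subseteq> Y n" using ch fX by (auto simp: is_channel_def)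
    finally show "G (f i) \<subseteq> Y n" .
  qed
  show ?thesis
    using greedy_code[OF N, where f=f and G=G and W=W and \<tau>=\<tau>] codewords f unfolding \<tau>_def by blast
qed

section \<open>Achievability on the second-order scale\<close>

text \<open>The one-codeword code, used when the target size is below one.\<close>

lemma trivial_code:
  fixes W :: "nat \<Rightarrow> 'x \<Rightarrow> 'y pmf"
  assumes ch: "is_channel X Y W"
  shows "\<exists>c. is_code X Y n c \<and> code_size c = 1 \<and> err_prob W n c = 0"
proof -
  have "X n \<noteq> {}" using ch by (simp add: is_channel_def)
  then obtain x0 where x0: "x0 \<in> X n" by blast
  have "Y n \<inter> set_pmf (W n x0) = UNIV \<inter> set_pmf (W n x0)" using ch x0 by (auto simp: is_channel_def)
  then have "measure_pmf.prob (W n x0) (Y n) = 1"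
    using measure_Int_set_pmf[of "W n x0" "Y n"] measure_Int_set_pmf[of "W n x0" UNIV] by simp
  then show ?thesis
    by (intro exI[of _ "(1, \<lambda>_. x0, \<lambda>_. Y n)"])
       (auto simp: is_code_def code_size_def err_prob_def x0 disjoint_family_on_def)
qed

lemma feinstein_term_le_info_spectrum:
  assumes t: "0 < real n powr \<beta>" and a: "a < real n * R1 + real n powr \<beta> * c"
  shows "measure_pmf.expectation (P n) (\<lambda>x. measure_pmf.prob (W n x)
           {y. ln (pmf (W n x) y / pmf (bind_pmf (P n) (W n)) y) \<le> a})
         \<le> info_spectrum \<beta> W R1 P n c"
  unfolding info_spectrum_def out_dist_def
proof (rule integral_mono)
  fix x
  have "{y. ln (pmf (W n x) y / pmf (bind_pmf (P n) (W n)) y) \<le> a}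
     \<subseteq> {y. (ln (pmf (W n x) y / pmf (bind_pmf (P n) (W n)) y) - real n * R1) / real n powr \<beta> < c}"
    using a t by (auto simp: pos_divide_less_eq mult.commute)
  then show "measure_pmf.prob (W n x) {y. ln (pmf (W n x) y / pmf (bind_pmf (P n) (W n)) y) \<le> a}
    \<le> measure_pmf.prob (W n x)
        {y. (ln (pmf (W n x) y / pmf (bind_pmf (P n) (W n)) y) - real n * R1) / real n powr \<beta> < c}"
    by (rule measure_pmf.finite_measure_mono) simp
qed (auto intro: integrable_channel_prob)

lemma code_size_near_exp:
  assumes "0 \<le> x"
  obtains N :: nat where "1 \<le> N" "x \<le> ln (real N)" "real N \<le> 2 * exp x"
proof
  define N where "N = nat \<lceil>exp x\<rceil>"
  have ceil1: "(1::int) \<le> \<lceil>exp x\<rceil>" using assms by simp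
  then show N1: "1 \<le> N" unfolding N_def by linarith
  have NN: "real N = real_of_int \<lceil>exp x\<rceil>" unfolding N_def using ceil1 by simp
  have "exp x \<le> real N" unfolding NN by (rule le_of_int_ceiling)
  then show "x \<le> ln (real N)" using N1 by (simp add: ln_ge_iff)
  have "real N \<le> exp x + 1" unfolding NN by (rule of_int_ceiling_le_add_one)
  also have "\<dots> \<le> 2 * exp x" using assms by simp
  finally show "real N \<le> 2 * exp x" .
qed

lemma achieve_blocklength:
  fixes W :: "nat \<Rightarrow> 'x \<Rightarrow> 'y pmf"
  assumes ch: "is_channel X Y W" and P: "set_pmf (P n) \<subseteq> X n" and th: "0 < \<theta>" and n: "1 \<le> n"
  shows "\<exists>c. is_code X Y n c \<and>
      R2 - 3 * \<theta> \<le> (ln (real (code_size c)) - real n * R1) / real n powr \<beta> \<and>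
      err_prob W n c \<le> info_spectrum \<beta> W R1 P n (R2 - \<theta>) + 2 * exp (- \<theta> * real n powr \<beta>)"
proof -
  define t where "t = real n powr \<beta>"
  have t: "0 < t" using n by (simp add: t_def)
  define x where "x = real n * R1 + t * (R2 - 3 * \<theta>)"
  have penalty_nonneg: "0 \<le> 2 * exp (- \<theta> * real n powr \<beta>)" by simp
  show ?thesis
  proof (cases "x \<le> 0")
    case True
    obtain c where c: "is_code X Y n c" "code_size c = 1" "err_prob W n c = 0"
      using trivial_code[OF ch] by blast
    have "R2 - 3 * \<theta> \<le> (0 - real n * R1) / t" using True t by (simp add: x_def field_simps)
    then show ?thesis
      using c info_spectrum_bounds(1)[of \<beta> W R1 P n "R2 - \<theta>"] penalty_nonneg
      by (intro exI[of _ c]) (simp add: t_def)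
  next
    case False
    obtain N where N1: "1 \<le> N" and Nge: "x \<le> ln (real N)" and Nle: "real N \<le> 2 * exp x"
      using code_size_near_exp[of x] False by auto
    define a where "a = x + \<theta> * t"
    obtain c where c: "is_code X Y n c" "code_size c = N"
      "err_prob W n c \<le> measure_pmf.expectation (P n) (\<lambda>x. measure_pmf.prob (W n x)
          {y. ln (pmf (W n x) y / pmf (bind_pmf (P n) (W n)) y) \<le> a}) + real N * exp (- a)"
      using feinstein_code[OF ch P N1, of a] by blast
    have "real N * exp (- a) \<le> 2 * exp x * exp (- a)" using Nle by simp
    also have "\<dots> = 2 * exp (- \<theta> * real n powr \<beta>)" by (simp add: a_def t_def exp_add[symmetric])
    finally have penalty: "real N * exp (- a) \<le> 2 * exp (- \<theta> * real n powr \<beta>)" .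
    have "a < real n * R1 + real n powr \<beta> * (R2 - \<theta>)"
      using th t by (simp add: a_def x_def t_def[symmetric] algebra_simps)
    note spectrum = feinstein_term_le_info_spectrum[OF _ this, of P W]
    from Nge have "R2 - 3 * \<theta> \<le> (ln (real N) - real n * R1) / t" using t by (simp add: x_def field_simps)
    then show ?thesis using c spectrum penalty t by (intro exI[of _ c]) (simp add: t_def)
  qed
qed

lemma achievable_code_seq:
  fixes W :: "nat \<Rightarrow> 'x \<Rightarrow> 'y pmf"
  assumes ch: "is_channel X Y W" and P: "P \<in> input_seqs X" and th: "\<forall>n. 0 < \<theta> n"
  shows "\<exists>\<Phi>\<in>code_seqs X Y. \<forall>n\<ge>1.
      R2 - 3 * \<theta> n \<le> (ln (real (code_size (\<Phi> n))) - real n * R1) / real n powr \<beta> \<and>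
      err_prob W n (\<Phi> n) \<le> info_spectrum \<beta> W R1 P n (R2 - \<theta> n) + 2 * exp (- \<theta> n * real n powr \<beta>)"
proof -
  have "\<forall>n. \<exists>c. is_code X Y n c \<and> (1 \<le> n \<longrightarrow>
      R2 - 3 * \<theta> n \<le> (ln (real (code_size c)) - real n * R1) / real n powr \<beta> \<and>
      err_prob W n c \<le> info_spectrum \<beta> W R1 P n (R2 - \<theta> n) + 2 * exp (- \<theta> n * real n powr \<beta>))"
  proof
    fix n
    have Pn: "set_pmf (P n) \<subseteq> X n" using P by (auto simp: input_seqs_def)
    show "\<exists>c. is_code X Y n c \<and> (1 \<le> n \<longrightarrow>
      R2 - 3 * \<theta> n \<le> (ln (real (code_size c)) - real n * R1) / real n powr \<beta> \<and>
      err_prob W n c \<le> info_spectrum \<beta> W R1 P n (R2 - \<theta> n) + 2 * exp (- \<theta> n * real n powr \<beta>))"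
    proof (cases "1 \<le> n")
      case True then show ?thesis using achieve_blocklength[where P=P and n=n, OF ch Pn th[rule_format] True] by blast
    next
      case False then show ?thesis using trivial_code[OF ch] by blast
    qed
  qed
  then obtain \<Phi> where "\<forall>n. is_code X Y n (\<Phi> n) \<and> (1 \<le> n \<longrightarrow>
      R2 - 3 * \<theta> n \<le> (ln (real (code_size (\<Phi> n))) - real n * R1) / real n powr \<beta> \<and>
      err_prob W n (\<Phi> n) \<le> info_spectrum \<beta> W R1 P n (R2 - \<theta> n) + 2 * exp (- \<theta> n * real n powr \<beta>))"
    by metis
  then show ?thesis unfolding code_seqs_def by blast
qed

lemma second_order_rate_ge:
  assumes "r \<longlonglongrightarrow> \<rho>"
    and "\<forall>n\<ge>1. r n \<le> (ln (real (code_size (\<Phi> n))) - real n * R1) / real n powr \<beta>"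
  shows "ereal \<rho> \<le> second_order_rate \<beta> R1 \<Phi>"
proof -
  have "liminf (\<lambda>n. ereal (r n)) = ereal \<rho>"
    using assms(1) by (intro lim_imp_Liminf) auto
  moreover have "liminf (\<lambda>n. ereal (r n)) \<le> second_order_rate \<beta> R1 \<Phi>"
    unfolding second_order_rate_def
    by (rule Liminf_mono) (use assms(2) in \<open>auto simp: eventually_sequentially\<close>)
  ultimately show ?thesis by simp
qed

lemma achieve_Ccap:
  fixes W :: "nat \<Rightarrow> 'x \<Rightarrow> 'y pmf"
  assumes b: "0 < \<beta>" and ch: "is_channel X Y W" and P: "P \<in> input_seqs X"
  shows "Icap \<beta> W \<epsilon> R1 P \<le> Ccap \<beta> X Y W \<epsilon> R1"
  unfolding Icap_def
proof (rule Sup_least)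
  fix u assume "u \<in> ereal ` {R2. Ip \<beta> W R2 R1 P \<le> ereal \<epsilon>}"
  then obtain R2 where u: "u = ereal R2" and R2: "Ip \<beta> W R2 R1 P \<le> ereal \<epsilon>" by auto
  show "u \<le> Ccap \<beta> X Y W \<epsilon> R1" unfolding u
  proof (rule dense_le)
    fix x assume x: "x < ereal R2"
    show "x \<le> Ccap \<beta> X Y W \<epsilon> R1"
    proof (cases x)
      case (real r)
      define \<delta> where "\<delta> = (R2 - r) / 3"
      have d: "0 < \<delta>" using x real by (simp add: \<delta>_def)
      obtain \<Phi> where \<Phi>: "\<Phi> \<in> code_seqs X Y" and bounds: "\<forall>n\<ge>1.
          R2 - 3 * \<delta> \<le> (ln (real (code_size (\<Phi> n))) - real n * R1) / real n powr \<beta> \<and>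
          err_prob W n (\<Phi> n) \<le> info_spectrum \<beta> W R1 P n (R2 - \<delta>) + 2 * exp (- \<delta> * real n powr \<beta>)"
        using achievable_code_seq[OF ch P, of "\<lambda>_. \<delta>" R2 R1] d by blast
      have "R2 - 3 * \<delta> = r" by (simp add: \<delta>_def field_simps)
      then have rate: "ereal r \<le> second_order_rate \<beta> R1 \<Phi>"
        using bounds by (intro second_order_rate_ge[of "\<lambda>_. r"]) auto
      have null: "(\<lambda>n. 2 * exp (- \<delta> * real n powr \<beta>)) \<longlonglongrightarrow> 0" using b d by real_asymp
      have "limsup (\<lambda>n. ereal (err_prob W n (\<Phi> n)))
          \<le> limsup (\<lambda>n. ereal (info_spectrum \<beta> W R1 P n (R2 - \<delta>)))"
        by (rule limsup_le_plus_null[OF null]) (use bounds in \<open>auto simp: eventually_sequentially\<close>)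
      also have "\<dots> = Ip \<beta> W (R2 - \<delta>) R1 P" by (simp add: Ip_eq_limsup_info_spectrum)
      also have "\<dots> \<le> Ip \<beta> W R2 R1 P" using d by (intro Ip_mono) simp
      also have "\<dots> \<le> ereal \<epsilon>" by (rule R2)
      finally have "second_order_rate \<beta> R1 \<Phi> \<le> Ccap \<beta> X Y W \<epsilon> R1"
        unfolding Ccap_def using \<Phi> by (intro Sup_upper) auto
      then show ?thesis using rate real by simp
    qed (use x in auto)
  qed
qed

lemma vanishing_slack:
  fixes S :: "nat \<Rightarrow> real \<Rightarrow> real"
  assumes b: "0 < \<beta>"
    and ev: "\<And>k::nat. eventually (\<lambda>n. S n (1 / (real k + 1)) < l + 1 / (real k + 1)) sequentially"
  shows "\<exists>\<theta>. (\<forall>n. 0 < \<theta> n) \<and> \<theta> \<longlonglongrightarrow> 0 \<and> (\<lambda>n. exp (- \<theta> n * real n powr \<beta>)) \<longlonglongrightarrow> 0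
           \<and> eventually (\<lambda>n. S n (\<theta> n) < l + \<theta> n) sequentially"
proof -
  define Pk where "Pk k n \<longleftrightarrow> S n (1 / (real k + 1)) < l + 1 / (real k + 1)
      \<and> (real k + 1) * (real k + 1) \<le> real n powr \<beta>" for k n
  have "filterlim (\<lambda>n::nat. real n powr \<beta>) at_top sequentially" using b by real_asymp
  then have "eventually (\<lambda>n. (real k + 1) * (real k + 1) \<le> real n powr \<beta>) sequentially" for k
    unfolding filterlim_at_top by blast
  then have "eventually (Pk k) sequentially" for k
    unfolding Pk_def using ev by (rule eventually_conj[rotated])
  then obtain kn where kn: "filterlim kn at_top sequentially" and evk: "eventually (\<lambda>n. Pk (kn n) n) sequentially"
    using diagonal_eventually[of Pk] by blast
  define \<theta> where "\<theta> n = 1 / (real (kn n) + 1)" for n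
  have "(\<lambda>k::nat. 1 / (real k + 1)) \<longlonglongrightarrow> 0" by real_asymp
  then have th0: "\<theta> \<longlonglongrightarrow> 0" unfolding \<theta>_def by (rule filterlim_compose[OF _ kn])
  have "(\<lambda>k::nat. exp (- real k)) \<longlonglongrightarrow> 0" by real_asymp
  then have expk: "(\<lambda>n. exp (- real (kn n))) \<longlonglongrightarrow> 0" by (rule filterlim_compose[OF _ kn])
  have exp_bound: "exp (- \<theta> n * real n powr \<beta>) \<le> exp (- real (kn n))" if "Pk (kn n) n" for n
  proof -
    have "real (kn n) + 1 \<le> real n powr \<beta> / (real (kn n) + 1)"
      using that by (simp add: Pk_def le_divide_eq)
    then show ?thesis by (simp add: \<theta>_def)
  qed
  have "eventually (\<lambda>n. exp (- \<theta> n * real n powr \<beta>) \<le> exp (- real (kn n))) sequentially"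
    using evk by (rule eventually_mono) (rule exp_bound)
  then have "(\<lambda>n. exp (- \<theta> n * real n powr \<beta>)) \<longlonglongrightarrow> 0"
    by (intro tendsto_sandwich[OF _ _ tendsto_const expk]) auto
  moreover have "eventually (\<lambda>n. S n (\<theta> n) < l + \<theta> n) sequentially"
    using evk by (rule eventually_mono) (simp add: Pk_def \<theta>_def)
  ultimately show ?thesis using th0 by (intro exI[of _ \<theta>]) (auto simp: \<theta>_def)
qed

lemma achieve_Cp:
  fixes W :: "nat \<Rightarrow> 'x \<Rightarrow> 'y pmf"
  assumes b: "0 < \<beta>" and ch: "is_channel X Y W" and P: "P \<in> input_seqs X"
  shows "Cp \<beta> X Y W R2 R1 \<le> Lim (at_right 0) (\<lambda>\<gamma>. Ip \<beta> W (R2 - \<gamma>) R1 P)"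
proof -
  define L where "L = (SUP \<gamma>\<in>{0<..}. Ip \<beta> W (R2 - \<gamma>) R1 P)"
  have "Ip \<beta> W (R2 - 1) R1 P \<le> L" unfolding L_def by (rule SUP_upper) simp
  moreover have "L \<le> 1" unfolding L_def by (rule SUP_least) (rule Ip_bounds(2))
  ultimately obtain l where l: "L = ereal l"
    using Ip_bounds(1)[of \<beta> W "R2 - 1" R1 P] by (cases L) auto
  have "eventually (\<lambda>n. info_spectrum \<beta> W R1 P n (R2 - 1 / (real k + 1)) < l + 1 / (real k + 1)) sequentially"
    for k :: nat
  proof -
    have "Ip \<beta> W (R2 - 1 / (real k + 1)) R1 P \<le> L" unfolding L_def by (rule SUP_upper) simp
    also have "\<dots> < ereal (l + 1 / (real k + 1))" by (simp add: l)
    finally show ?thesis by (auto simp: Ip_eq_limsup_info_spectrum dest: Limsup_lessD)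
  qed
  then obtain \<theta> where th: "\<forall>n. 0 < \<theta> n" and th0: "\<theta> \<longlonglongrightarrow> 0"
    and exp0: "(\<lambda>n. exp (- \<theta> n * real n powr \<beta>)) \<longlonglongrightarrow> 0"
    and spectrum: "eventually (\<lambda>n. info_spectrum \<beta> W R1 P n (R2 - \<theta> n) < l + \<theta> n) sequentially"
    using vanishing_slack[OF b, of "\<lambda>n \<theta>. info_spectrum \<beta> W R1 P n (R2 - \<theta>)" l] by blast
  obtain \<Phi> where \<Phi>: "\<Phi> \<in> code_seqs X Y" and bounds: "\<forall>n\<ge>1.
      R2 - 3 * \<theta> n \<le> (ln (real (code_size (\<Phi> n))) - real n * R1) / real n powr \<beta> \<and>
      err_prob W n (\<Phi> n) \<le> info_spectrum \<beta> W R1 P n (R2 - \<theta> n) + 2 * exp (- \<theta> n * real n powr \<beta>)"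
    using achievable_code_seq[OF ch P th] by blast
  have rate: "ereal R2 \<le> second_order_rate \<beta> R1 \<Phi>"
    by (rule second_order_rate_ge[of "\<lambda>n. R2 - 3 * \<theta> n"]) (use bounds th0 in \<open>auto intro!: tendsto_eq_intros\<close>)
  have null: "(\<lambda>n. \<theta> n + 2 * exp (- \<theta> n * real n powr \<beta>)) \<longlonglongrightarrow> 0"
    using tendsto_add[OF th0 tendsto_mult[OF tendsto_const exp0, of 2]] by simp
  have "limsup (\<lambda>n. ereal (err_prob W n (\<Phi> n))) \<le> limsup (\<lambda>n. ereal l)"
  proof (rule limsup_le_plus_null[OF null])
    show "eventually (\<lambda>n. err_prob W n (\<Phi> n) \<le> l + (\<theta> n + 2 * exp (- \<theta> n * real n powr \<beta>))) sequentially"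
      using spectrum eventually_ge_at_top[of 1] by eventually_elim (use bounds in force)
  qed
  then have "limsup (\<lambda>n. ereal (err_prob W n (\<Phi> n))) \<le> L" by (simp add: l Limsup_const)
  moreover have "Cp \<beta> X Y W R2 R1 \<le> limsup (\<lambda>n. ereal (err_prob W n (\<Phi> n)))"
    unfolding Cp_def using \<Phi> rate by (intro Inf_lower) auto
  ultimately show ?thesis by (simp add: Lim_Ip L_def)
qed

lemma INF_Ip_le_INF_SUP_Jp:
  assumes "is_channel X Y W"
  shows "(INF P\<in>input_seqs X. Lim (at_right 0) (\<lambda>\<gamma>. Ip \<beta> W (R2 - \<gamma>) R1 P))
     \<le> (INF P\<in>input_seqs X. SUP Q\<in>output_seqs Y. Lim (at_right 0) (\<lambda>\<gamma>. Jp \<beta> W (R2 - \<gamma>) R1 P Q))"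
proof (rule INF_superset_mono[OF order_refl])
  fix P assume "P \<in> input_seqs X"
  then have "out_dist W P \<in> output_seqs Y" by (rule out_dist_output[OF assms])
  then show "Lim (at_right 0) (\<lambda>\<gamma>. Ip \<beta> W (R2 - \<gamma>) R1 P)
      \<le> (SUP Q\<in>output_seqs Y. Lim (at_right 0) (\<lambda>\<gamma>. Jp \<beta> W (R2 - \<gamma>) R1 P Q))"
    by (rule SUP_upper2) (simp add: Jp_out_dist)
qed

lemma INF_SUP_Jp_le_Cp:
  assumes "0 < \<beta>"
  shows "(INF P\<in>input_seqs X. SUP Q\<in>output_seqs Y. Lim (at_right 0) (\<lambda>\<gamma>. Jp \<beta> W (R2 - \<gamma>) R1 P Q))
     \<le> Cp \<beta> X Y W R2 R1"
  unfolding Cp_def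
proof (rule Inf_greatest, safe)
  fix \<Phi> assume \<Phi>: "\<Phi> \<in> code_seqs X Y" and rate: "ereal R2 \<le> second_order_rate \<beta> R1 \<Phi>"
  show "(INF P\<in>input_seqs X. SUP Q\<in>output_seqs Y. Lim (at_right 0) (\<lambda>\<gamma>. Jp \<beta> W (R2 - \<gamma>) R1 P Q))
      \<le> limsup (\<lambda>n. ereal (err_prob W n (\<Phi> n)))"
    by (rule INF_lower2[OF codeword_dist_input[OF \<Phi>]], rule SUP_least)
       (rule converse_Cp[OF assms \<Phi> rate])
qed

lemma SUP_INF_Jcap_le_SUP_Icap:
  assumes "is_channel X Y W"
  shows "(SUP P\<in>input_seqs X. INF Q\<in>output_seqs Y. Jcap \<beta> W \<epsilon> R1 P Q)
     \<le> (SUP P\<in>input_seqs X. Icap \<beta> W \<epsilon> R1 P)"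
proof (rule SUP_subset_mono[OF order_refl])
  fix P assume "P \<in> input_seqs X"
  then have "out_dist W P \<in> output_seqs Y" by (rule out_dist_output[OF assms])
  then show "(INF Q\<in>output_seqs Y. Jcap \<beta> W \<epsilon> R1 P Q) \<le> Icap \<beta> W \<epsilon> R1 P"
    by (rule INF_lower2) (simp add: Jcap_def Icap_def Jp_out_dist)
qed

lemma Ccap_le_SUP_INF_Jcap:
  assumes "0 < \<beta>"
  shows "Ccap \<beta> X Y W \<epsilon> R1 \<le> (SUP P\<in>input_seqs X. INF Q\<in>output_seqs Y. Jcap \<beta> W \<epsilon> R1 P Q)"
  unfolding Ccap_def
proof (rule Sup_least, safe)
  fix \<Phi> assume \<Phi>: "\<Phi> \<in> code_seqs X Y" and err: "limsup (\<lambda>n. ereal (err_prob W n (\<Phi> n))) \<le> ereal \<epsilon>"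
  show "second_order_rate \<beta> R1 \<Phi> \<le> (SUP P\<in>input_seqs X. INF Q\<in>output_seqs Y. Jcap \<beta> W \<epsilon> R1 P Q)"
    by (rule SUP_upper2[OF codeword_dist_input[OF \<Phi>]], rule INF_greatest)
       (rule converse_Ccap[OF assms \<Phi> err])
qed

lemma Cp_characterization:
  assumes b: "0 < \<beta>" and ch: "is_channel X Y W"
  shows "Cp \<beta> X Y W R2 R1 = (INF P\<in>input_seqs X. Lim (at_right 0) (\<lambda>\<gamma>. Ip \<beta> W (R2 - \<gamma>) R1 P))
    \<and> (INF P\<in>input_seqs X. Lim (at_right 0) (\<lambda>\<gamma>. Ip \<beta> W (R2 - \<gamma>) R1 P))
        = (INF P\<in>input_seqs X. SUP Q\<in>output_seqs Y. Lim (at_right 0) (\<lambda>\<gamma>. Jp \<beta> W (R2 - \<gamma>) R1 P Q))"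
proof -
  have "Cp \<beta> X Y W R2 R1 \<le> (INF P\<in>input_seqs X. Lim (at_right 0) (\<lambda>\<gamma>. Ip \<beta> W (R2 - \<gamma>) R1 P))"
    by (rule INF_greatest) (rule achieve_Cp[OF b ch])
  moreover have "(INF P\<in>input_seqs X. Lim (at_right 0) (\<lambda>\<gamma>. Ip \<beta> W (R2 - \<gamma>) R1 P))
      \<le> (INF P\<in>input_seqs X. SUP Q\<in>output_seqs Y. Lim (at_right 0) (\<lambda>\<gamma>. Jp \<beta> W (R2 - \<gamma>) R1 P Q))"
    by (rule INF_Ip_le_INF_SUP_Jp[OF ch])
  moreover have "(INF P\<in>input_seqs X. SUP Q\<in>output_seqs Y. Lim (at_right 0) (\<lambda>\<gamma>. Jp \<beta> W (R2 - \<gamma>) R1 P Q))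
      \<le> Cp \<beta> X Y W R2 R1"
    by (rule INF_SUP_Jp_le_Cp[OF b])
  ultimately show ?thesis by (intro conjI antisym) (auto intro: order_trans)
qed

lemma Ccap_characterization:
  assumes b: "0 < \<beta>" and ch: "is_channel X Y W"
  shows "Ccap \<beta> X Y W \<epsilon> R1 = (SUP P\<in>input_seqs X. Icap \<beta> W \<epsilon> R1 P)
    \<and> (SUP P\<in>input_seqs X. Icap \<beta> W \<epsilon> R1 P)
        = (SUP P\<in>input_seqs X. INF Q\<in>output_seqs Y. Jcap \<beta> W \<epsilon> R1 P Q)"
proof -
  have "(SUP P\<in>input_seqs X. Icap \<beta> W \<epsilon> R1 P) \<le> Ccap \<beta> X Y W \<epsilon> R1"
    by (rule SUP_least) (rule achieve_Ccap[OF b ch])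
  moreover have "(SUP P\<in>input_seqs X. INF Q\<in>output_seqs Y. Jcap \<beta> W \<epsilon> R1 P Q)
      \<le> (SUP P\<in>input_seqs X. Icap \<beta> W \<epsilon> R1 P)"
    by (rule SUP_INF_Jcap_le_SUP_Icap[OF ch])
  moreover have "Ccap \<beta> X Y W \<epsilon> R1 \<le> (SUP P\<in>input_seqs X. INF Q\<in>output_seqs Y. Jcap \<beta> W \<epsilon> R1 P Q)"
    by (rule Ccap_le_SUP_INF_Jcap[OF b])
  ultimately show ?thesis by (intro conjI antisym) (auto intro: order_trans)
qed

text \<open>The theorem: the characterizations hold for every \<open>\<beta> > 0\<close> (the restriction \<open>\<beta> < 1\<close>
  only makes the second-order scale meaningful) and every error level \<open>\<epsilon>\<close>.\<close>

theorem theorem4: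
  fixes \<beta> :: real
    and X :: "nat \<Rightarrow> 'x set" and Y :: "nat \<Rightarrow> 'y set" and W :: "nat \<Rightarrow> 'x \<Rightarrow> 'y pmf"
    and R1 R2 :: real
  assumes "0 < \<beta>" and "\<beta> < 1"
    and "is_channel X Y W"
  shows "Cp \<beta> X Y W R2 R1
           = (INF P\<in>input_seqs X. Lim (at_right 0) (\<lambda>\<gamma>. Ip \<beta> W (R2 - \<gamma>) R1 P))
       \<and> (INF P\<in>input_seqs X. Lim (at_right 0) (\<lambda>\<gamma>. Ip \<beta> W (R2 - \<gamma>) R1 P))
           = (INF P\<in>input_seqs X. SUP Q\<in>output_seqs Y.
                 Lim (at_right 0) (\<lambda>\<gamma>. Jp \<beta> W (R2 - \<gamma>) R1 P Q))
       \<and> (\<forall>\<epsilon>::real. 0 \<le> \<epsilon> \<and> \<epsilon> < 1 \<longrightarrow>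
           Ccap \<beta> X Y W \<epsilon> R1 = (SUP P\<in>input_seqs X. Icap \<beta> W \<epsilon> R1 P)
         \<and> (SUP P\<in>input_seqs X. Icap \<beta> W \<epsilon> R1 P)
             = (SUP P\<in>input_seqs X. INF Q\<in>output_seqs Y. Jcap \<beta> W \<epsilon> R1 P Q))"
  using Cp_characterization[OF assms(1,3)] Ccap_characterization[OF assms(1,3)] by blast

end
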